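(* Let $\alpha,\beta$ be real (or complex) parameters and let $n,k$ be non-negative integers. Then $$\genfrac{\lfloor}{\rfloor}{0pt}{}{n}{k}^{\alpha,\beta}=\sum_{j=0}^{n-k}(-1)^{j}\,\big((k+1)\beta+n\alpha\,|\,\beta\big)^{\overline{j}}\,\genfrac{\lfloor}{\rfloor}{0pt}{}{n+1}{k+j+1}^{\alpha,\beta},$$ where $(y|\theta)^{\overline{j}}=y(y+\theta)\cdots(y+(j-1)\theta)$ and $(y|\theta)^{\overline{0}}=1$; that is, $\big((k+1)\beta+n\alpha\,|\,\beta\big)^{\overline{j}}=\prod_{i=1}^{j}\big(n\alpha+(k+i)\beta\big)$.
   Context: For parameters $\alpha,\beta$, the generalized Stirling numbers $\genfrac{\lfloor}{\rfloor}{0pt}{}{n}{k}^{\alpha,\beta}$, $0\le k\le n$, are defined by the polynomial identity in $x$ $$x(x+\alpha)\cdots(x+(n-1)\alpha)=\sum_{k=0}^{n}\genfrac{\lfloor}{\rfloor}{0pt}{}{n}{k}^{\alpha,\beta}\,x(x-\beta)\cdots(x-(k-1)\beta),$$ (empty products equal $1$), and $\genfrac{\lfloor}{\rfloor}{0pt}{}{n}{k}^{\alpha,\beta}=0$ for $k<0$ or $k>n$. *)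

theory Defs
  imports Complex_Main
begin

definition gen_rise :: "complex \<Rightarrow> complex \<Rightarrow> nat \<Rightarrow> complex" where
  "gen_rise x a n = (\<Prod>i<n. x + of_nat i * a)"

definition gen_fall :: "complex \<Rightarrow> complex \<Rightarrow> nat \<Rightarrow> complex" where
  "gen_fall x b k = (\<Prod>i<k. x - of_nat i * b)"

definition gstirling :: "complex \<Rightarrow> complex \<Rightarrow> nat \<Rightarrow> nat \<Rightarrow> complex" where
  "gstirling \<alpha> \<beta> n k =
     (if k \<le> n then
        (THE c :: nat \<Rightarrow> complex.
           (\<forall>x. gen_rise x \<alpha> n = (\<Sum>j\<le>n. c j * gen_fall x \<beta> j)) \<and>
           (\<forall>j>n. c j = 0)) k
      else 0)"

end

theory Submission
  imports Defs "HOL-Computational_Algebra.Polynomial"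
begin

text \<open>The triangular recurrence
  \<open>S(n+1,k) = S(n,k-1) + (n\<alpha> + k\<beta>) S(n,k)\<close> produces coefficients of the required
  expansion; since the falling products form a triangular basis, these are the generalized
  Stirling numbers. Unrolling the recurrence in \<open>S(n+1,k+j+1)\<close> along \<open>j\<close> telescopes to the
  stated alternating sum, the remainder term vanishing once \<open>k+j+1 > n\<close>.\<close>

fun gstirling_rec :: "complex \<Rightarrow> complex \<Rightarrow> nat \<Rightarrow> nat \<Rightarrow> complex" where
  "gstirling_rec a b 0 k = (if k = 0 then 1 else 0)"
| "gstirling_rec a b (Suc n) k =
     (case k of 0 \<Rightarrow> 0 | Suc k' \<Rightarrow> gstirling_rec a b n k')
     + (of_nat n * a + of_nat k * b) * gstirling_rec a b n k"

lemma gstirling_rec_eq_0: "n < k \<Longrightarrow> gstirling_rec a b n k = 0"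
proof (induction n arbitrary: k)
  case (Suc n)
  then obtain k' where "k = Suc k'" "n < k'" by (cases k) auto
  with Suc.IH show ?case by simp
qed simp

lemma gen_rise_Suc: "gen_rise x a (Suc n) = gen_rise x a n * (x + of_nat n * a)"
  by (simp add: gen_rise_def)

lemma gen_fall_Suc: "gen_fall x b (Suc j) = gen_fall x b j * (x - of_nat j * b)"
  by (simp add: gen_fall_def)

lemma gen_rise_expansion:
  "gen_rise x a n = (\<Sum>j\<le>n. gstirling_rec a b n j * gen_fall x b j)"
proof (induction n)
  case 0
  show ?case by (simp add: gen_rise_def gen_fall_def)
next
  case (Suc n)
  let ?S = "gstirling_rec a b n" and ?f = "gen_fall x b"
  let ?w = "\<lambda>j. of_nat n * a + of_nat j * b"
  have "gen_rise x a (Suc n) = (\<Sum>j\<le>n. ?S j * (?f j * (x + of_nat n * a)))"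
    using Suc by (simp add: gen_rise_Suc sum_distrib_right mult.assoc)
  also have "\<dots> = (\<Sum>j\<le>n. ?S j * ?f (Suc j) + ?w j * ?S j * ?f j)"
    by (intro sum.cong refl) (simp add: gen_fall_Suc algebra_simps)
  also have "\<dots> = (\<Sum>j\<le>n. ?S j * ?f (Suc j)) + (\<Sum>j\<le>n. ?w j * ?S j * ?f j)"
    by (rule sum.distrib)
  also have "(\<Sum>j\<le>n. ?S j * ?f (Suc j))
      = (\<Sum>j\<le>Suc n. (case j of 0 \<Rightarrow> 0 | Suc j' \<Rightarrow> ?S j') * ?f j)"
    by (subst sum.atMost_Suc_shift) simp
  also have "(\<Sum>j\<le>n. ?w j * ?S j * ?f j) = (\<Sum>j\<le>Suc n. ?w j * ?S j * ?f j)"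
    by (simp add: gstirling_rec_eq_0)
  finally show ?case
    by (simp add: sum.distrib[symmetric] algebra_simps)
qed

lemma triangular_combination_eq_0:
  fixes p :: "nat \<Rightarrow> 'a::idom poly"
  assumes deg: "\<And>i. degree (p i) \<le> i" and diag: "\<And>i. coeff (p i) i \<noteq> 0"
    and comb: "(\<Sum>i\<le>n. smult (d i) (p i)) = 0" and "j \<le> n"
  shows "d j = 0"
  using comb \<open>j \<le> n\<close>
proof (induction n arbitrary: j)
  case 0
  then show ?case using diag[of 0] by auto
next
  case (Suc n)
  have "coeff (p i) (Suc n) = 0" if "i \<le> n" for i
    using deg[of i] that by (intro coeff_eq_0) simp
  then have "coeff (\<Sum>i\<le>Suc n. smult (d i) (p i)) (Suc n) = d (Suc n) * coeff (p (Suc n)) (Suc n)"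
    by (simp add: coeff_sum)
  with Suc.prems(1) diag have top: "d (Suc n) = 0"
    by simp
  with Suc.prems(1) have "(\<Sum>i\<le>n. smult (d i) (p i)) = 0"
    by simp
  with Suc.IH top Suc.prems(2) show ?case
    by (cases "j = Suc n") auto
qed

definition gen_fall_poly :: "complex \<Rightarrow> nat \<Rightarrow> complex poly" where
  "gen_fall_poly b j = (\<Prod>i<j. [:- (of_nat i * b), 1:])"

lemma poly_gen_fall_poly: "poly (gen_fall_poly b j) x = gen_fall x b j"
  by (simp add: gen_fall_poly_def gen_fall_def poly_prod)

lemma degree_gen_fall_poly: "degree (gen_fall_poly b j) = j"
  by (simp add: gen_fall_poly_def degree_prod_eq_sum_degree)

lemma lead_coeff_gen_fall_poly: "lead_coeff (gen_fall_poly b j) = 1"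
  by (simp add: gen_fall_poly_def lead_coeff_prod)

lemma gen_fall_combination_eq_0:
  assumes "\<forall>x. (\<Sum>i\<le>n. d i * gen_fall x b i) = 0" and "j \<le> n"
  shows "d j = 0"
proof (rule triangular_combination_eq_0[where p = "gen_fall_poly b"])
  have "poly (\<Sum>i\<le>n. smult (d i) (gen_fall_poly b i)) x = 0" for x
    using assms(1) by (simp add: poly_sum poly_gen_fall_poly)
  then show "(\<Sum>i\<le>n. smult (d i) (gen_fall_poly b i)) = 0"
    using poly_all_0_iff_0 by blast
qed (use assms(2) degree_gen_fall_poly lead_coeff_gen_fall_poly in simp_all)

lemma gstirling_eq_rec: "gstirling a b n k = gstirling_rec a b n k"
proof (cases "k \<le> n")
  case True
  let ?P = "\<lambda>c. (\<forall>x. gen_rise x a n = (\<Sum>j\<le>n. c j * gen_fall x b j)) \<and> (\<forall>j>n. c j = 0)"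
  have "(THE c. ?P c) = gstirling_rec a b n"
  proof (rule the_equality)
    show "?P (gstirling_rec a b n)"
      using gen_rise_expansion gstirling_rec_eq_0 by blast
  next
    fix c
    assume c: "?P c"
    then have "\<forall>x. (\<Sum>j\<le>n. (c j - gstirling_rec a b n j) * gen_fall x b j) = 0"
      using gen_rise_expansion[of _ a n b] by (simp add: algebra_simps sum_subtractf)
    then have "c j = gstirling_rec a b n j" if "j \<le> n" for j
      using gen_fall_combination_eq_0 that by fastforce
    with c gstirling_rec_eq_0 show "c = gstirling_rec a b n"
      by (metis not_le ext)
  qed
  with True show ?thesis
    by (simp add: gstirling_def)
qed (simp add: gstirling_def gstirling_rec_eq_0)

lemma gstirling_rec_telescope:
  fixes a b :: complex and n k m :: nat
  defines "P \<equiv> \<lambda>j. \<Prod>i=1..j. of_nat n * a + of_nat (k + i) * b"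
  shows "(\<Sum>j=0..m. (-1)^j * P j * gstirling_rec a b (Suc n) (k + j + 1))
    = gstirling_rec a b n k - (-1)^(Suc m) * P (Suc m) * gstirling_rec a b n (k + Suc m)"
proof (induction m)
  case (Suc m)
  have "P (Suc (Suc m)) = P (Suc m) * (of_nat n * a + of_nat (k + Suc (Suc m)) * b)"
    by (simp add: P_def prod.nat_ivl_Suc')
  with Suc show ?case
    by (simp add: algebra_simps)
qed (simp add: P_def algebra_simps)

theorem theorem4:
  fixes \<alpha> \<beta> :: complex and n k :: nat
  shows "gstirling \<alpha> \<beta> n k =
    (\<Sum>j=0..n-k. (-1)^j * (\<Prod>i=1..j. of_nat n * \<alpha> + of_nat (k+i) * \<beta>)
                 * gstirling \<alpha> \<beta> (n+1) (k+j+1))"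
proof (cases "k \<le> n")
  case True
  then have "gstirling_rec \<alpha> \<beta> n (k + Suc (n - k)) = 0"
    by (intro gstirling_rec_eq_0) simp
  with gstirling_rec_telescope[of n \<alpha> k \<beta> "n - k"] show ?thesis
    by (simp add: gstirling_eq_rec)
qed (simp add: gstirling_eq_rec gstirling_rec_eq_0)

end
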